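(* Let $H$ be a complex Hilbert space, $\varphi,\psi:[0,1]\to\mathbb{R}$ continuous, $t\in[0,1]$, and let $(A_n)\subset\mathbb{B}(H)$ and $A\in\mathbb{B}(H)$ satisfy $\|A_n-A\|_t\to0$ as $n\to\infty$. Then $$\omega_t(\varphi,\psi;A)=\lim_{n\to\infty}\omega_t(\varphi,\psi;A_n)\quad\text{and}\quad c_t(\varphi,\psi;A)=\lim_{n\to\infty}c_t(\varphi,\psi;A_n).$$
   Context: $S_1(H)$ is the unit sphere of $H$. For $B\in\mathbb{B}(H)$: $\|B\|_t=\|\varphi(t)B+\psi(t)B^*\|$ (operator norm), $\omega_t(\varphi,\psi;B)=\sup_{x\in S_1(H)}|\langle(\varphi(t)B+\psi(t)B^* )x,x\rangle|$, $c_t(\varphi,\psi;B)=\inf_{x\in S_1(H)}|\langle(\varphi(t)B+\psi(t)B^* )x,x\rangle|$. *)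

theory Defs
  imports "HOL-Analysis.Analysis"
begin

class complex_inner = real_normed_vector +
  fixes scaleC :: "complex \<Rightarrow> 'a \<Rightarrow> 'a"
    and cinner :: "'a \<Rightarrow> 'a \<Rightarrow> complex"
  assumes scaleC_add_right: "scaleC a (x + y) = scaleC a x + scaleC a y"
    and scaleC_add_left: "scaleC (a + b) x = scaleC a x + scaleC b x"
    and scaleC_scaleC: "scaleC a (scaleC b x) = scaleC (a * b) x"
    and scaleC_one: "scaleC 1 x = x"
    and scaleR_scaleC: "scaleR r x = scaleC (complex_of_real r) x"
    and cinner_commute: "cinner x y = cnj (cinner y x)"
    and cinner_add_left: "cinner (x + y) z = cinner x z + cinner y z"
    and cinner_scaleC_left: "cinner (scaleC a x) y = a * cinner x y"
    and cinner_self_real: "Im (cinner x x) = 0"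
    and cinner_self_nonneg: "0 \<le> Re (cinner x x)"
    and cinner_self_eq_zero: "cinner x x = 0 \<longleftrightarrow> x = 0"
    and norm_eq_sqrt_cinner: "norm x = sqrt (Re (cinner x x))"

class chilbert_space = complex_inner + complete_space

definition bounded_clinear :: "('a::complex_inner \<Rightarrow> 'b::complex_inner) \<Rightarrow> bool" where
  "bounded_clinear f \<longleftrightarrow>
     (\<forall>x y. f (x + y) = f x + f y) \<and> (\<forall>c x. f (scaleC c x) = scaleC c (f x)) \<and>
     (\<exists>K. \<forall>x. norm (f x) \<le> norm x * K)"

definition adjoint :: "('a::chilbert_space \<Rightarrow> 'a) \<Rightarrow> ('a \<Rightarrow> 'a)" where
  "adjoint B = (THE Bs. \<forall>x y. cinner (B x) y = cinner x (Bs y))"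

definition op_t :: "(real \<Rightarrow> real) \<Rightarrow> (real \<Rightarrow> real) \<Rightarrow> real \<Rightarrow> ('a::chilbert_space \<Rightarrow> 'a) \<Rightarrow> 'a \<Rightarrow> 'a" where
  "op_t \<phi> \<psi> t B = (\<lambda>x. \<phi> t *\<^sub>R B x + \<psi> t *\<^sub>R adjoint B x)"

definition tnorm :: "(real \<Rightarrow> real) \<Rightarrow> (real \<Rightarrow> real) \<Rightarrow> real \<Rightarrow> ('a::chilbert_space \<Rightarrow> 'a) \<Rightarrow> real" where
  "tnorm \<phi> \<psi> t B = onorm (op_t \<phi> \<psi> t B)"

definition omega_t :: "(real \<Rightarrow> real) \<Rightarrow> (real \<Rightarrow> real) \<Rightarrow> real \<Rightarrow> ('a::chilbert_space \<Rightarrow> 'a) \<Rightarrow> real" where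
  "omega_t \<phi> \<psi> t B = (SUP x\<in>{x. norm x = 1}. cmod (cinner (op_t \<phi> \<psi> t B x) x))"

definition c_t :: "(real \<Rightarrow> real) \<Rightarrow> (real \<Rightarrow> real) \<Rightarrow> real \<Rightarrow> ('a::chilbert_space \<Rightarrow> 'a) \<Rightarrow> real" where
  "c_t \<phi> \<psi> t B = (INF x\<in>{x. norm x = 1}. cmod (cinner (op_t \<phi> \<psi> t B x) x))"

end

theory Submission
  imports Defs
begin

(* For a unit vector x, |<T x, x>| <= ||T||, and B |-> phi(t) B + psi(t) B* is additive.
   Hence |<T_A x, x>| and |<T_An x, x>| differ by at most ||An - A||_t uniformly on the unit
   sphere, so their supremum omega_t and infimum c_t converge. Additivity of the adjoint
   needs the adjoint to exist, which is the Riesz representation theorem, proved via the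
   nearest point of the closed kernel of a functional. *)

lemma cinner_zero_left [simp]: "cinner 0 y = 0"
  using cinner_add_left[of 0 0 y] by simp

lemma cinner_zero_right [simp]: "cinner x 0 = 0"
  by (metis cinner_commute cinner_zero_left complex_cnj_zero)

lemma cinner_add_right: "cinner x (y + z) = cinner x y + cinner x z"
  by (metis cinner_commute cinner_add_left complex_cnj_add)

lemma cinner_diff_left: "cinner (x - y) z = cinner x z - cinner y z"
  using cinner_add_left[of "x - y" y z] by simp

lemma cinner_diff_right: "cinner x (y - z) = cinner x y - cinner x z"
  by (metis cinner_commute cinner_diff_left complex_cnj_diff)

lemma cinner_scaleC_right: "cinner x (scaleC a y) = cnj a * cinner x y"
  by (metis cinner_commute cinner_scaleC_left complex_cnj_mult)

lemma cinner_scaleR_right: "cinner x (r *\<^sub>R y) = of_real r * cinner x y"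
  by (simp add: scaleR_scaleC cinner_scaleC_right)

lemma cinner_self: "cinner x x = of_real ((norm x)\<^sup>2)"
  by (simp add: complex_eq_iff norm_eq_sqrt_cinner cinner_self_real cinner_self_nonneg)

lemma cinner_eqI: "(\<And>x. cinner x a = cinner x b) \<Longrightarrow> a = b"
  by (metis cinner_diff_right cinner_self_eq_zero right_minus_eq)

lemma norm_diff_projection_sq:
  fixes x y :: "'a::complex_inner"
  assumes "y \<noteq> 0"
  shows "(norm (x - scaleC (cinner x y / of_real ((norm y)\<^sup>2)) y))\<^sup>2
           = (norm x)\<^sup>2 - (cmod (cinner x y))\<^sup>2 / (norm y)\<^sup>2"
proof -
  define c where "c = cinner x y"
  define s where "s = (norm y)\<^sup>2"
  define a where "a = c / of_real s"
  have s: "s \<noteq> 0" using assms by (simp add: s_def)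
  have "cinner (x - scaleC a y) (x - scaleC a y)
          = cinner x x - cnj a * c - a * cnj c + a * cnj a * cinner y y"
    unfolding c_def
    by (simp add: cinner_diff_left cinner_diff_right cinner_scaleC_left cinner_scaleC_right
        algebra_simps flip: cinner_commute)
  also have "\<dots> = of_real ((norm x)\<^sup>2 - (cmod c)\<^sup>2 / s)"
    using s by (simp add: a_def cinner_self complex_norm_square[simplified] field_simps flip: s_def)
  finally have "complex_of_real ((norm (x - scaleC a y))\<^sup>2) = of_real ((norm x)\<^sup>2 - (cmod c)\<^sup>2 / s)"
    by (simp only: cinner_self)
  then show ?thesis
    unfolding of_real_eq_iff a_def c_def s_def .
qed

lemma cauchy_schwarz: "cmod (cinner x y) \<le> norm x * norm y"
proof (cases "y = 0")
  case False
  have "0 \<le> (norm x)\<^sup>2 - (cmod (cinner x y))\<^sup>2 / (norm y)\<^sup>2"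
    using norm_diff_projection_sq[OF False, of x] by (metis zero_le_power2)
  then have "(cmod (cinner x y))\<^sup>2 \<le> (norm x * norm y)\<^sup>2"
    using False by (simp add: field_simps power_mult_distrib)
  then show ?thesis by (simp add: power2_le_iff_abs_le)
qed simp

lemma parallelogram_law:
  fixes x y :: "'a::complex_inner"
  shows "(norm (x + y))\<^sup>2 + (norm (x - y))\<^sup>2 = 2 * (norm x)\<^sup>2 + 2 * (norm y)\<^sup>2"
proof -
  have "cinner (x + y) (x + y) + cinner (x - y) (x - y) = 2 * cinner x x + 2 * cinner y y"
    by (simp add: cinner_add_left cinner_add_right cinner_diff_left cinner_diff_right algebra_simps)
  from arg_cong[where f = Re, OF this] show ?thesis by (simp add: cinner_self)
qed

lemma convex_minimizing_sequence_Cauchy: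
  fixes u :: "'a::complex_inner"
  assumes S: "convex S" and ns: "\<And>k. ns k \<in> S"
    and d: "\<And>n. n \<in> S \<Longrightarrow> d \<le> (norm (u - n))\<^sup>2"
    and lim: "(\<lambda>k. (norm (u - ns k))\<^sup>2) \<longlonglongrightarrow> d"
  shows "Cauchy ns"
proof -
  define D where "D k = (norm (u - ns k))\<^sup>2 - d" for k
  have close: "(norm (ns j - ns k))\<^sup>2 \<le> 2 * D j + 2 * D k" for j k
  proof -
    have "(1/2) *\<^sub>R ns j + (1/2) *\<^sub>R ns k \<in> S"
      using convexD[OF S ns ns, of "1/2" "1/2"] by simp
    then have "4 * d \<le> 4 * (norm (u - ((1/2) *\<^sub>R ns j + (1/2) *\<^sub>R ns k)))\<^sup>2"
      using d by simp
    also have "\<dots> = (norm ((u - ns j) + (u - ns k)))\<^sup>2"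
    proof -
      have "(u - ns j) + (u - ns k) = 2 *\<^sub>R (u - ((1/2) *\<^sub>R ns j + (1/2) *\<^sub>R ns k))"
        by (simp add: algebra_simps scaleR_2)
      then show ?thesis by (simp add: power_mult_distrib)
    qed
    finally show ?thesis
      using parallelogram_law[of "u - ns j" "u - ns k"] by (simp add: D_def norm_minus_commute)
  qed
  have "D \<longlonglongrightarrow> 0"
    using lim unfolding D_def by (rule LIM_zero)
  show ?thesis
  proof (rule CauchyI)
    fix e :: real
    assume "0 < e"
    then obtain M where M: "\<And>k. k \<ge> M \<Longrightarrow> D k < e\<^sup>2 / 4"
      using order_tendstoD(2)[OF \<open>D \<longlonglongrightarrow> 0\<close>, of "e\<^sup>2 / 4"]
      by (auto simp: eventually_sequentially)
    have "norm (ns m - ns n) < e" if "m \<ge> M" "n \<ge> M" for m n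
    proof -
      have "(norm (ns m - ns n))\<^sup>2 < e\<^sup>2"
        using close[of m n] M[OF that(1)] M[OF that(2)] by linarith
      then show ?thesis
        using \<open>0 < e\<close> by (simp add: power_less_imp_less_base)
    qed
    then show "\<exists>M. \<forall>m\<ge>M. \<forall>n\<ge>M. norm (ns m - ns n) < e"
      by blast
  qed
qed

lemma convex_closed_nearest_point_exists:
  fixes u :: "'a::{complex_inner, complete_space}"
  assumes S: "convex S" "closed S" "S \<noteq> {}"
  shows "\<exists>n0\<in>S. \<forall>n\<in>S. norm (u - n0) \<le> norm (u - n)"
proof -
  define D where "D n = (norm (u - n))\<^sup>2" for n
  define d where "d = (INF n\<in>S. D n)"
  have d_le: "d \<le> D n" if "n \<in> S" for n
    unfolding d_def by (rule cINF_lower[OF bdd_belowI2[of _ 0]]) (auto simp: D_def that)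
  have "\<exists>n\<in>S. D n < d + inverse (real (Suc k))" for k
    using cInf_lessD[of "D ` S" "d + inverse (real (Suc k))"] S(3) by (auto simp: d_def)
  then obtain ns where ns: "\<And>k. ns k \<in> S" "\<And>k. D (ns k) < d + inverse (real (Suc k))"
    by metis
  have "(\<lambda>k. D (ns k)) \<longlonglongrightarrow> d"
  proof (rule tendsto_sandwich[OF _ _ tendsto_const])
    show "\<forall>\<^sub>F k in sequentially. d \<le> D (ns k)"
      using d_le ns(1) by simp
    show "\<forall>\<^sub>F k in sequentially. D (ns k) \<le> d + inverse (real (Suc k))"
      using ns(2) by (simp add: less_imp_le)
    show "(\<lambda>k. d + inverse (real (Suc k))) \<longlonglongrightarrow> d"
      using tendsto_add[OF tendsto_const LIMSEQ_inverse_real_of_nat, of d] by simp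
  qed
  then have "Cauchy ns"
    using convex_minimizing_sequence_Cauchy[of S ns d u] S(1) ns(1) d_le by (simp add: D_def)
  then obtain n0 where n0: "ns \<longlonglongrightarrow> n0"
    using Cauchy_convergent convergent_def by blast
  have "n0 \<in> S"
    using closed_sequentially[OF S(2) ns(1) n0] .
  moreover have "D n0 = d"
  proof (rule LIMSEQ_unique)
    show "(\<lambda>k. D (ns k)) \<longlonglongrightarrow> D n0"
      unfolding D_def by (intro tendsto_intros n0)
  qed fact
  ultimately show ?thesis
    using d_le by (metis D_def norm_ge_zero power2_le_imp_le)
qed

lemma nearest_point_orthogonal:
  fixes u :: "'a::complex_inner"
  assumes add: "\<And>m n. m \<in> N \<Longrightarrow> n \<in> N \<Longrightarrow> m + n \<in> N"
    and scale: "\<And>a n. n \<in> N \<Longrightarrow> scaleC a n \<in> N"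
    and n0: "n0 \<in> N" and nearest: "\<And>n. n \<in> N \<Longrightarrow> norm (u - n0) \<le> norm (u - n)"
    and n: "n \<in> N"
  shows "cinner (u - n0) n = 0"
proof (cases "n = 0")
  case False
  define a where "a = cinner (u - n0) n / of_real ((norm n)\<^sup>2)"
  have "norm (u - n0) \<le> norm (u - (n0 + scaleC a n))"
    using nearest add n0 scale n by blast
  then have "(norm (u - n0))\<^sup>2 \<le> (norm ((u - n0) - scaleC a n))\<^sup>2"
    by (intro power_mono) (simp_all add: algebra_simps)
  then have "(cmod (cinner (u - n0) n))\<^sup>2 / (norm n)\<^sup>2 \<le> 0"
    using norm_diff_projection_sq[OF False, of "u - n0"] unfolding a_def by linarith
  then show ?thesis
    using False by (simp add: divide_le_0_iff)
qed simp

lemma riesz_representation: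
  fixes f :: "'a::chilbert_space \<Rightarrow> complex"
  assumes add: "\<And>x y. f (x + y) = f x + f y" and scale: "\<And>c x. f (scaleC c x) = c * f x"
    and bounded: "\<And>x. cmod (f x) \<le> norm x * K"
  shows "\<exists>w. \<forall>x. f x = cinner x w"
proof (cases "\<forall>x. f x = 0")
  case True
  then show ?thesis by (intro exI[of _ 0]) simp
next
  case False
  have lin: "bounded_linear f"
    by (rule bounded_linear_intro[of _ K]) (simp_all add: add scale bounded scaleR_scaleC scaleR_conv_of_real)
  define N where "N = f -` {0}"
  have "convex N" "closed N" "N \<noteq> {}"
    using convex_linear_vimage[OF bounded_linear.linear[OF lin]]
      continuous_closed_vimage[OF _ linear_continuous_at[OF lin]] linear_0[OF bounded_linear.linear[OF lin]]
    by (auto simp: N_def)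
  obtain u0 where "f u0 \<noteq> 0"
    using False by blast
  define u where "u = scaleC (1 / f u0) u0"
  obtain n0 where n0: "n0 \<in> N" "\<And>n. n \<in> N \<Longrightarrow> norm (u - n0) \<le> norm (u - n)"
    using convex_closed_nearest_point_exists[OF \<open>convex N\<close> \<open>closed N\<close> \<open>N \<noteq> {}\<close>] by blast
  define z where "z = u - n0"
  have fz: "f z = 1"
    using \<open>f u0 \<noteq> 0\<close> n0(1) lin by (simp add: z_def u_def N_def scale linear_diff bounded_linear.linear)
  have orth: "cinner z n = 0" if "n \<in> N" for n
    unfolding z_def by (rule nearest_point_orthogonal[OF _ _ n0 that]) (simp_all add: N_def add scale)
  show ?thesis
  proof (intro exI allI)
    fix x
    have "cinner z (x - scaleC (f x) z) = 0"
      using orth lin by (simp add: N_def scale fz linear_diff bounded_linear.linear)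
    then have "cinner (x - scaleC (f x) z) z = 0"
      by (metis cinner_commute complex_cnj_zero)
    then have "cinner x z = f x * of_real ((norm z)\<^sup>2)"
      by (simp add: cinner_diff_left cinner_scaleC_left cinner_self)
    moreover have "z \<noteq> 0"
      using fz lin by (auto simp: linear_0 bounded_linear.linear)
    ultimately show "f x = cinner x (scaleC (of_real (1 / (norm z)\<^sup>2)) z)"
      by (simp add: cinner_scaleC_right)
  qed
qed

lemma bounded_clinearD:
  fixes B :: "'a::complex_inner \<Rightarrow> 'b::complex_inner"
  assumes "bounded_clinear B"
  shows "B (x + y) = B x + B y" "B (scaleC c x) = scaleC c (B x)"
    "\<exists>K\<ge>0. \<forall>x. norm (B x) \<le> norm x * K"
proof -
  show "B (x + y) = B x + B y" "B (scaleC c x) = scaleC c (B x)"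
    using assms unfolding bounded_clinear_def by auto
  obtain K where "\<forall>x. norm (B x) \<le> norm x * K"
    using assms unfolding bounded_clinear_def by auto
  then have "\<forall>x. norm (B x) \<le> norm x * max K 0"
    by (meson max.cobounded1 mult_left_mono norm_ge_zero order_trans)
  then show "\<exists>K\<ge>0. \<forall>x. norm (B x) \<le> norm x * K"
    by (intro exI[of _ "max K 0"]) auto
qed

lemma bounded_clinear_imp_bounded_linear:
  assumes B: "bounded_clinear B"
  shows "bounded_linear B"
proof -
  obtain K where "\<forall>x. norm (B x) \<le> norm x * K"
    using bounded_clinearD(3)[OF B] by blast
  then show ?thesis
    by (intro bounded_linear_intro[of _ K]) (simp_all add: bounded_clinearD[OF B] scaleR_scaleC)
qed

lemma bounded_clinear_sub:
  fixes A B :: "'a::complex_inner \<Rightarrow> 'b::complex_inner"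
  assumes A: "bounded_clinear A" and B: "bounded_clinear B"
  shows "bounded_clinear (\<lambda>x. A x - B x)"
proof -
  obtain K1 K2 where "\<And>x. norm (A x) \<le> norm x * K1" "\<And>x. norm (B x) \<le> norm x * K2"
    using bounded_clinearD(3)[OF A] bounded_clinearD(3)[OF B] by blast
  then have "norm (A x - B x) \<le> norm x * (K1 + K2)" for x
    by (smt (verit) distrib_left norm_triangle_ineq4)
  moreover have "scaleC c (A x - B x) = scaleC c (A x) - scaleC c (B x)" for c x
    using scaleC_add_right[of c "A x - B x" "B x"] by (simp add: eq_diff_eq)
  ultimately show ?thesis
    unfolding bounded_clinear_def by (auto simp: bounded_clinearD[OF A] bounded_clinearD[OF B])
qed

lemma adjoint_eqI:
  assumes "\<And>x y. cinner (B x) y = cinner x (G y)"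
  shows "adjoint B = G"
  unfolding adjoint_def
proof (rule the_equality)
  show "\<forall>x y. cinner (B x) y = cinner x (G y)"
    using assms by blast
  show "Bs = G" if "\<forall>x y. cinner (B x) y = cinner x (Bs y)" for Bs
    using that assms by (intro ext cinner_eqI) metis
qed

lemma cinner_adjoint:
  fixes B :: "'a::chilbert_space \<Rightarrow> 'a"
  assumes B: "bounded_clinear B"
  shows "cinner (B x) y = cinner x (adjoint B y)"
proof -
  obtain K where K: "K \<ge> 0" "\<And>x. norm (B x) \<le> norm x * K"
    using bounded_clinearD(3)[OF B] by blast
  have "\<exists>w. \<forall>x. cinner (B x) y = cinner x w" for y
  proof (rule riesz_representation)
    show "cinner (B (x + z)) y = cinner (B x) y + cinner (B z) y" for x z
      by (simp add: bounded_clinearD[OF B] cinner_add_left)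
    show "cinner (B (scaleC c x)) y = c * cinner (B x) y" for c x
      by (simp add: bounded_clinearD[OF B] cinner_scaleC_left)
    show "cmod (cinner (B x) y) \<le> norm x * (K * norm y)" for x
      using cauchy_schwarz[of "B x" y] mult_right_mono[OF K(2)[of x] norm_ge_zero[of y]]
      by (simp add: mult.assoc)
  qed
  then obtain G where "\<And>x y. cinner (B x) y = cinner x (G y)"
    by metis
  then show ?thesis
    using adjoint_eqI[of B G] by simp
qed

lemma adjoint_sub:
  fixes A B :: "'a::chilbert_space \<Rightarrow> 'a"
  assumes A: "bounded_clinear A" and B: "bounded_clinear B"
  shows "adjoint (\<lambda>x. A x - B x) = (\<lambda>y. adjoint A y - adjoint B y)"
  by (rule adjoint_eqI)
    (simp add: cinner_diff_left cinner_diff_right cinner_adjoint[OF A] cinner_adjoint[OF B])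

lemma bounded_linear_adjoint:
  fixes B :: "'a::chilbert_space \<Rightarrow> 'a"
  assumes B: "bounded_clinear B"
  shows "bounded_linear (adjoint B)"
proof -
  obtain K where K: "K \<ge> 0" "\<And>x. norm (B x) \<le> norm x * K"
    using bounded_clinearD(3)[OF B] by blast
  show ?thesis
  proof (rule bounded_linear_intro[of _ K])
    show "adjoint B (a + b) = adjoint B a + adjoint B b" for a b
      by (rule cinner_eqI) (simp add: cinner_adjoint[OF B, symmetric] cinner_add_right)
    show "adjoint B (r *\<^sub>R a) = r *\<^sub>R adjoint B a" for r a
      by (rule cinner_eqI) (simp add: cinner_adjoint[OF B, symmetric] cinner_scaleR_right)
    show "norm (adjoint B y) \<le> norm y * K" for y
    proof -
      define v where "v = adjoint B y"
      have "(norm v)\<^sup>2 = Re (cinner (B v) y)"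
        by (simp add: cinner_adjoint[OF B] cinner_self v_def)
      also have "\<dots> \<le> norm (B v) * norm y"
        using complex_Re_le_cmod cauchy_schwarz order_trans by blast
      also have "\<dots> \<le> norm v * (norm y * K)"
        using mult_right_mono[OF K(2)[of v] norm_ge_zero[of y]] by (simp add: ac_simps)
      finally have "norm v * norm v \<le> norm v * (norm y * K)"
        by (simp add: power2_eq_square)
      then show ?thesis
        using K(1) by (cases "v = 0") (simp_all add: v_def)
    qed
  qed
qed

lemma bounded_linear_op_t:
  fixes B :: "'a::chilbert_space \<Rightarrow> 'a"
  assumes "bounded_clinear B"
  shows "bounded_linear (op_t \<phi> \<psi> t B)"
  unfolding op_t_def
  by (intro bounded_linear_add bounded_linear_compose[OF bounded_linear_scaleR_right]
      bounded_clinear_imp_bounded_linear bounded_linear_adjoint assms)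

lemma op_t_sub:
  fixes A B :: "'a::chilbert_space \<Rightarrow> 'a"
  assumes "bounded_clinear A" and "bounded_clinear B"
  shows "op_t \<phi> \<psi> t (\<lambda>x. A x - B x) x = op_t \<phi> \<psi> t A x - op_t \<phi> \<psi> t B x"
  unfolding op_t_def adjoint_sub[OF assms] by (simp add: algebra_simps)

lemma cmod_cinner_le_onorm:
  assumes "bounded_linear T" and "norm x = 1"
  shows "cmod (cinner (T x) x) \<le> onorm T"
  using cauchy_schwarz[of "T x" x] onorm[OF assms(1), of x] assms(2) by simp

lemma numerical_range_sub_le_tnorm:
  fixes A B :: "'a::chilbert_space \<Rightarrow> 'a"
  assumes A: "bounded_clinear A" and B: "bounded_clinear B" and x: "norm x = 1"
  shows "\<bar>cmod (cinner (op_t \<phi> \<psi> t A x) x) - cmod (cinner (op_t \<phi> \<psi> t B x) x)\<bar>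
           \<le> tnorm \<phi> \<psi> t (\<lambda>x. A x - B x)"
proof -
  have "\<bar>cmod (cinner (op_t \<phi> \<psi> t A x) x) - cmod (cinner (op_t \<phi> \<psi> t B x) x)\<bar>
          \<le> cmod (cinner (op_t \<phi> \<psi> t A x) x - cinner (op_t \<phi> \<psi> t B x) x)"
    by (rule norm_triangle_ineq3)
  also have "\<dots> = cmod (cinner (op_t \<phi> \<psi> t (\<lambda>x. A x - B x) x) x)"
    by (simp add: op_t_sub[OF A B] cinner_diff_left)
  also have "\<dots> \<le> tnorm \<phi> \<psi> t (\<lambda>x. A x - B x)"
    unfolding tnorm_def
    by (rule cmod_cinner_le_onorm[OF bounded_linear_op_t[OF bounded_clinear_sub[OF A B]] x])
  finally show ?thesis .
qed

lemma abs_SUP_diff_le: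
  fixes f g :: "'b \<Rightarrow> real"
  assumes S: "S \<noteq> {}" and "bdd_above (f ` S)" and "bdd_above (g ` S)"
    and d: "\<And>x. x \<in> S \<Longrightarrow> \<bar>f x - g x\<bar> \<le> e"
  shows "\<bar>(SUP x\<in>S. f x) - (SUP x\<in>S. g x)\<bar> \<le> e"
proof -
  have "f x \<le> (SUP x\<in>S. g x) + e" "g x \<le> (SUP x\<in>S. f x) + e" if "x \<in> S" for x
    using cSUP_upper[OF that assms(2)] cSUP_upper[OF that assms(3)] d[OF that] by linarith+
  then show ?thesis
    using cSUP_least[OF S, of f] cSUP_least[OF S, of g] by (smt (verit))
qed

lemma abs_INF_diff_le:
  fixes f g :: "'b \<Rightarrow> real"
  assumes S: "S \<noteq> {}" and "bdd_below (f ` S)" and "bdd_below (g ` S)"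
    and d: "\<And>x. x \<in> S \<Longrightarrow> \<bar>f x - g x\<bar> \<le> e"
  shows "\<bar>(INF x\<in>S. f x) - (INF x\<in>S. g x)\<bar> \<le> e"
proof -
  have "(INF x\<in>S. g x) - e \<le> f x" "(INF x\<in>S. f x) - e \<le> g x" if "x \<in> S" for x
    using cINF_lower[OF assms(2) that] cINF_lower[OF assms(3) that] d[OF that] by linarith+
  then show ?thesis
    using cINF_greatest[OF S, of _ f] cINF_greatest[OF S, of _ g] by (smt (verit))
qed

lemma abs_omega_t_diff_le_tnorm:
  fixes A B :: "'a::chilbert_space \<Rightarrow> 'a"
  assumes A: "bounded_clinear A" and B: "bounded_clinear B"
  shows "\<bar>omega_t \<phi> \<psi> t A - omega_t \<phi> \<psi> t B\<bar> \<le> tnorm \<phi> \<psi> t (\<lambda>x. A x - B x)"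
proof (cases "{x::'a. norm x = 1} = {}")
  case True
  then show ?thesis
    unfolding omega_t_def tnorm_def using onorm_pos_le[OF bounded_linear_op_t[OF bounded_clinear_sub[OF A B]]]
    by simp
next
  case False
  have "bdd_above ((\<lambda>x. cmod (cinner (op_t \<phi> \<psi> t C x) x)) ` {x. norm x = 1})"
    if "bounded_clinear C" for C :: "'a \<Rightarrow> 'a"
    by (rule bdd_aboveI2[where M = "onorm (op_t \<phi> \<psi> t C)"])
      (simp add: cmod_cinner_le_onorm bounded_linear_op_t that)
  then show ?thesis
    unfolding omega_t_def
    using abs_SUP_diff_le[OF False] numerical_range_sub_le_tnorm[OF A B] A B by simp
qed

lemma abs_c_t_diff_le_tnorm:
  fixes A B :: "'a::chilbert_space \<Rightarrow> 'a"
  assumes A: "bounded_clinear A" and B: "bounded_clinear B"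
  shows "\<bar>c_t \<phi> \<psi> t A - c_t \<phi> \<psi> t B\<bar> \<le> tnorm \<phi> \<psi> t (\<lambda>x. A x - B x)"
proof (cases "{x::'a. norm x = 1} = {}")
  case True
  then show ?thesis
    unfolding c_t_def tnorm_def using onorm_pos_le[OF bounded_linear_op_t[OF bounded_clinear_sub[OF A B]]]
    by simp
next
  case False
  have "bdd_below ((\<lambda>x. cmod (cinner (op_t \<phi> \<psi> t C x) x)) ` S)" for C :: "'a \<Rightarrow> 'a" and S
    by (auto intro: bdd_belowI2[of _ 0])
  then show ?thesis
    unfolding c_t_def
    using abs_INF_diff_le[OF False] numerical_range_sub_le_tnorm[OF A B] by simp
qed

theorem theorem2p5:
  fixes \<phi> \<psi> :: "real \<Rightarrow> real" and t :: real
    and A :: "'a::chilbert_space \<Rightarrow> 'a" and An :: "nat \<Rightarrow> 'a \<Rightarrow> 'a"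
  assumes "continuous_on {0..1} \<phi>" and "continuous_on {0..1} \<psi>"
    and "t \<in> {0..1}"
    and "bounded_clinear A" and "\<And>n. bounded_clinear (An n)"
    and "(\<lambda>n. tnorm \<phi> \<psi> t (\<lambda>x. An n x - A x)) \<longlonglongrightarrow> 0"
  shows "(\<lambda>n. omega_t \<phi> \<psi> t (An n)) \<longlonglongrightarrow> omega_t \<phi> \<psi> t A \<and>
         (\<lambda>n. c_t \<phi> \<psi> t (An n)) \<longlonglongrightarrow> c_t \<phi> \<psi> t A"
proof -
  \<comment> \<open>The estimate holds for each fixed \<open>t\<close>.\<close>
  note A = assms(4) and An = assms(5) and lim = assms(6)
  have "(\<lambda>n. omega_t \<phi> \<psi> t (An n) - omega_t \<phi> \<psi> t A) \<longlonglongrightarrow> 0"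
    by (rule Lim_null_comparison[OF always_eventually lim])
      (simp add: abs_omega_t_diff_le_tnorm[OF An A])
  moreover have "(\<lambda>n. c_t \<phi> \<psi> t (An n) - c_t \<phi> \<psi> t A) \<longlonglongrightarrow> 0"
    by (rule Lim_null_comparison[OF always_eventually lim])
      (simp add: abs_c_t_diff_le_tnorm[OF An A])
  ultimately show ?thesis
    by (simp add: LIM_zero_cancel)
qed

end
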